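(* Let $G$ be a simple graph and $S\subset V(G)$ a set of pairwise non-adjacent vertices. If $G$ is $k$-shellable, then $G\setminus N_G[S]$ is $k$-shellable.
   Context: $N_G[S]=\bigcup_{x\in S}(N_G(x)\cup\{x\})$, where $N_G(x)$ is the set of neighbours of $x$; $G\setminus U$ deletes the vertices of $U$ and incident edges. A graph $H$ is $k$-shellable if its independence complex $\Delta_H$ (faces: sets of pairwise non-adjacent vertices) is. $\langle F_1,\ldots,F_s\rangle$ denotes the complex with facets $F_1,\dots,F_s$. A complex $\Gamma$ of dimension $d$ is $k$-shellable ($1\le k\le d+1$) if its facets can be ordered $F_1,\ldots,F_r$ such that for every $j=2,\ldots,r$, $\Gamma_j=\langle F_j\rangle\cap\langle F_1,\ldots,F_{j-1}\rangle$ satisfies (i) $\Gamma_j$ is generated by a nonempty set of faces of $\langle F_j\rangle$ of dimension $|F_j|-k-1$; (ii) if $\Gamma_j$ has more than one facet, then for every two distinct facets $\sigma,\tau$ of $\Gamma_j$, $F_j\subseteq\sigma\cup\tau$. *)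

theory Defs
  imports Main
begin

definition simple_graph :: "'a set \<Rightarrow> 'a set set \<Rightarrow> bool" where
  "simple_graph V E \<longleftrightarrow> finite V \<and> (\<forall>e\<in>E. e \<subseteq> V \<and> card e = 2)"

definition adjacent :: "'a set set \<Rightarrow> 'a \<Rightarrow> 'a \<Rightarrow> bool" where
  "adjacent E x y \<longleftrightarrow> {x, y} \<in> E"

definition independent_set :: "'a set set \<Rightarrow> 'a set \<Rightarrow> bool" where
  "independent_set E S \<longleftrightarrow> (\<forall>x\<in>S. \<forall>y\<in>S. \<not> adjacent E x y)"

definition closed_nbhd :: "'a set \<Rightarrow> 'a set set \<Rightarrow> 'a set \<Rightarrow> 'a set" where
  "closed_nbhd V E S = (\<Union>x\<in>S. {y\<in>V. adjacent E x y} \<union> {x})"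

definition del_verts :: "'a set \<Rightarrow> 'a set \<Rightarrow> 'a set" where
  "del_verts V U = V - U"

definition del_edges :: "'a set set \<Rightarrow> 'a set \<Rightarrow> 'a set set" where
  "del_edges E U = {e\<in>E. e \<inter> U = {}}"

definition ind_complex :: "'a set \<Rightarrow> 'a set set \<Rightarrow> 'a set set" where
  "ind_complex V E = {F. F \<subseteq> V \<and> independent_set E F}"

definition facets :: "'a set set \<Rightarrow> 'a set set" where
  "facets \<Gamma> = {F\<in>\<Gamma>. \<forall>G\<in>\<Gamma>. F \<subseteq> G \<longrightarrow> G = F}"

definition gen :: "'a set set \<Rightarrow> 'a set set" where
  "gen A = {\<sigma>. \<exists>F\<in>A. \<sigma> \<subseteq> F}"

text \<open>A shelling order witnessing k-shellability: a listing Fs of the facets, such that for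
  each j \<ge> 2 (index j in 0-based numbering, j \<ge> 1), Gamma_j = <F_j> \<inter> <F_1..F_{j-1}> is
  generated by a nonempty set of faces of <F_j> of dimension |F_j|-k-1 (i.e. cardinality
  |F_j|-k), and any two distinct facets of Gamma_j cover F_j.\<close>
definition k_shelling :: "nat \<Rightarrow> 'a set set \<Rightarrow> 'a set list \<Rightarrow> bool" where
  "k_shelling k \<Gamma> Fs \<longleftrightarrow>
     distinct Fs \<and> set Fs = facets \<Gamma> \<and>
     (\<forall>j. 0 < j \<and> j < length Fs \<longrightarrow>
        (let Fj = Fs ! j; \<Gamma>j = gen {Fj} \<inter> gen (set (take j Fs)) in
          (\<exists>A. A \<noteq> {} \<and> A \<subseteq> gen {Fj} \<and> (\<forall>\<sigma>\<in>A. card \<sigma> + k = card Fj) \<and> \<Gamma>j = gen A) \<and>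
          (\<forall>\<sigma>\<in>facets \<Gamma>j. \<forall>\<tau>\<in>facets \<Gamma>j. \<sigma> \<noteq> \<tau> \<longrightarrow> Fj \<subseteq> \<sigma> \<union> \<tau>)))"

definition k_shellable :: "nat \<Rightarrow> 'a set set \<Rightarrow> bool" where
  "k_shellable k \<Gamma> \<longleftrightarrow> 1 \<le> k \<and> (\<exists>Fs. k_shelling k \<Gamma> Fs)"

definition k_shellable_graph :: "nat \<Rightarrow> 'a set \<Rightarrow> 'a set set \<Rightarrow> bool" where
  "k_shellable_graph k V E \<longleftrightarrow> k_shellable k (ind_complex V E)"

end

theory Submission
  imports Defs
begin

text \<open>The independence complex of \<open>G \<setminus> N[S]\<close> is the link of the face \<open>S\<close> in the
  independence complex of \<open>G\<close>. Links of faces inherit \<open>k\<close>-shellability: removing \<open>S\<close> from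
  the facets containing \<open>S\<close>, listed in the order of a \<open>k\<close>-shelling, is again a \<open>k\<close>-shelling,
  because the link operation commutes with intersections and with taking the complex generated
  by a family, and it lowers all cardinalities by \<open>|S|\<close>.\<close>

definition link :: "'a set set \<Rightarrow> 'a set \<Rightarrow> 'a set set" where
  "link D S = {\<sigma>. \<sigma> \<inter> S = {} \<and> \<sigma> \<union> S \<in> D}"

definition shelling_step :: "nat \<Rightarrow> 'a set \<Rightarrow> 'a set set \<Rightarrow> bool" where
  "shelling_step k F X \<longleftrightarrow>
     (let \<Gamma> = gen {F} \<inter> gen X in
       (\<exists>A. A \<noteq> {} \<and> A \<subseteq> gen {F} \<and> (\<forall>\<sigma>\<in>A. card \<sigma> + k = card F) \<and> \<Gamma> = gen A) \<and>
       (\<forall>\<sigma>\<in>facets \<Gamma>. \<forall>\<tau>\<in>facets \<Gamma>. \<sigma> \<noteq> \<tau> \<longrightarrow> F \<subseteq> \<sigma> \<union> \<tau>))"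

lemma k_shelling_iff_shelling_step:
  "k_shelling k D Fs \<longleftrightarrow> distinct Fs \<and> set Fs = facets D \<and>
     (\<forall>j. 0 < j \<and> j < length Fs \<longrightarrow> shelling_step k (Fs ! j) (set (take j Fs)))"
  unfolding k_shelling_def shelling_step_def by (simp only: Let_def)

lemma link_Int: "link (A \<inter> B) S = link A S \<inter> link B S"
  unfolding link_def by blast

lemma link_gen: "link (gen A) S = gen ((\<lambda>F. F - S) ` {F\<in>A. S \<subseteq> F})"
proof (intro set_eqI iffI)
  fix \<sigma> assume "\<sigma> \<in> link (gen A) S"
  then obtain F where "F \<in> A" "\<sigma> \<inter> S = {}" "\<sigma> \<union> S \<subseteq> F"
    unfolding link_def gen_def by auto
  then have "F - S \<in> (\<lambda>F. F - S) ` {F\<in>A. S \<subseteq> F}" "\<sigma> \<subseteq> F - S" by auto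
  then show "\<sigma> \<in> gen ((\<lambda>F. F - S) ` {F\<in>A. S \<subseteq> F})"
    unfolding gen_def by blast
next
  fix \<sigma> assume "\<sigma> \<in> gen ((\<lambda>F. F - S) ` {F\<in>A. S \<subseteq> F})"
  then obtain F where "F \<in> A" "S \<subseteq> F" "\<sigma> \<subseteq> F - S"
    unfolding gen_def by auto
  then show "\<sigma> \<in> link (gen A) S"
    unfolding link_def gen_def by auto
qed

lemma facet_of_link:
  assumes "\<sigma> \<in> facets (link D S)"
  shows "\<sigma> \<union> S \<in> facets D" and "\<sigma> \<inter> S = {}"
proof -
  have \<sigma>: "\<sigma> \<inter> S = {}" "\<sigma> \<union> S \<in> D"
    using assms unfolding facets_def link_def by auto
  have "\<rho> = \<sigma> \<union> S" if "\<rho> \<in> D" "\<sigma> \<union> S \<subseteq> \<rho>" for \<rho>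
  proof -
    have "\<rho> - S \<in> link D S"
      using that unfolding link_def by (auto simp: Un_absorb2)
    moreover have "\<sigma> \<subseteq> \<rho> - S" using that \<sigma> by blast
    ultimately have "\<sigma> = \<rho> - S" using assms unfolding facets_def by blast
    then show ?thesis using that by blast
  qed
  then show "\<sigma> \<union> S \<in> facets D" using \<sigma> unfolding facets_def by blast
  show "\<sigma> \<inter> S = {}" by (fact \<sigma>(1))
qed

lemma facets_link: "facets (link D S) = (\<lambda>F. F - S) ` {F\<in>facets D. S \<subseteq> F}"
proof
  show "facets (link D S) \<subseteq> (\<lambda>F. F - S) ` {F\<in>facets D. S \<subseteq> F}"
  proof
    fix \<sigma> assume "\<sigma> \<in> facets (link D S)"
    with facet_of_link have "\<sigma> \<union> S \<in> facets D" "\<sigma> = (\<sigma> \<union> S) - S" by blast+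
    then show "\<sigma> \<in> (\<lambda>F. F - S) ` {F\<in>facets D. S \<subseteq> F}" by blast
  qed
next
  show "(\<lambda>F. F - S) ` {F\<in>facets D. S \<subseteq> F} \<subseteq> facets (link D S)"
  proof
    fix \<sigma> assume "\<sigma> \<in> (\<lambda>F. F - S) ` {F\<in>facets D. S \<subseteq> F}"
    then obtain F where F: "F \<in> facets D" "S \<subseteq> F" "\<sigma> = F - S" by blast
    have "\<sigma> \<in> link D S"
      using F unfolding link_def facets_def by (auto simp: Un_absorb2)
    moreover have "\<tau> = \<sigma>" if "\<tau> \<in> link D S" "\<sigma> \<subseteq> \<tau>" for \<tau>
    proof -
      have "\<tau> \<union> S \<in> D" "\<tau> \<inter> S = {}" using that unfolding link_def by auto
      moreover have "F \<subseteq> \<tau> \<union> S" using F that by blast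
      ultimately have "\<tau> \<union> S = F" using F unfolding facets_def by blast
      then show ?thesis using F \<open>\<tau> \<inter> S = {}\<close> by blast
    qed
    ultimately show "\<sigma> \<in> facets (link D S)" unfolding facets_def by blast
  qed
qed

lemma shelling_step_link:
  assumes step: "shelling_step k F X" and "finite F" and "S \<subseteq> F"
    and "F' \<in> X" "S \<subseteq> F'"
  shows "shelling_step k (F - S) ((\<lambda>F. F - S) ` {F\<in>X. S \<subseteq> F})"
proof -
  let ?\<Gamma> = "gen {F} \<inter> gen X"
  have link_\<Gamma>: "gen {F - S} \<inter> gen ((\<lambda>F. F - S) ` {F\<in>X. S \<subseteq> F}) = link ?\<Gamma> S"
  proof -
    have "{F'\<in>{F}. S \<subseteq> F'} = {F}" using \<open>S \<subseteq> F\<close> by blast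
    then show ?thesis by (simp only: link_Int link_gen image_insert image_empty)
  qed
  have "\<exists>A. A \<noteq> {} \<and> A \<subseteq> gen {F} \<and> (\<forall>\<sigma>\<in>A. card \<sigma> + k = card F) \<and> ?\<Gamma> = gen A"
    using step unfolding shelling_step_def Let_def by (rule conjunct1)
  then obtain A where A: "A \<noteq> {}" "A \<subseteq> gen {F}" "\<forall>\<sigma>\<in>A. card \<sigma> + k = card F"
    "?\<Gamma> = gen A" by blast
  have cover: "\<forall>\<sigma>\<in>facets ?\<Gamma>. \<forall>\<tau>\<in>facets ?\<Gamma>. \<sigma> \<noteq> \<tau> \<longrightarrow> F \<subseteq> \<sigma> \<union> \<tau>"
    using step unfolding shelling_step_def Let_def by (rule conjunct2)
  define A' where "A' = (\<lambda>a. a - S) ` {a\<in>A. S \<subseteq> a}"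
  have gen_A': "link ?\<Gamma> S = gen A'" unfolding A(4) A'_def by (rule link_gen)
  have "S \<in> gen A" using A(4) assms(3-5) unfolding gen_def by auto
  then have "A' \<noteq> {}" unfolding A'_def gen_def by auto
  moreover have "A' \<subseteq> gen {F - S}" using A(2) unfolding A'_def gen_def by auto
  moreover have "\<forall>\<sigma>\<in>A'. card \<sigma> + k = card (F - S)"
  proof
    fix \<sigma> assume "\<sigma> \<in> A'"
    then obtain a where a: "a \<in> A" "S \<subseteq> a" "\<sigma> = a - S" unfolding A'_def by blast
    have "a \<subseteq> F" using a(1) A(2) unfolding gen_def by blast
    then have "finite a" using \<open>finite F\<close> by (rule finite_subset)
    moreover have "finite S" using \<open>S \<subseteq> F\<close> \<open>finite F\<close> by (rule finite_subset)
    ultimately show "card \<sigma> + k = card (F - S)"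
      using A(3) a \<open>S \<subseteq> F\<close> card_mono[of a S] by (simp add: card_Diff_subset)
  qed
  ultimately have "\<exists>A. A \<noteq> {} \<and> A \<subseteq> gen {F - S} \<and> (\<forall>\<sigma>\<in>A. card \<sigma> + k = card (F - S)) \<and>
      link ?\<Gamma> S = gen A"
    using gen_A' by blast
  moreover have "\<forall>\<sigma>\<in>facets (link ?\<Gamma> S). \<forall>\<tau>\<in>facets (link ?\<Gamma> S). \<sigma> \<noteq> \<tau> \<longrightarrow> F - S \<subseteq> \<sigma> \<union> \<tau>"
  proof (intro ballI impI)
    fix \<sigma> \<tau> assume \<sigma>: "\<sigma> \<in> facets (link ?\<Gamma> S)" and \<tau>: "\<tau> \<in> facets (link ?\<Gamma> S)"
      and "\<sigma> \<noteq> \<tau>"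
    have "\<sigma> = (\<sigma> \<union> S) - S" "\<tau> = (\<tau> \<union> S) - S"
      using facet_of_link(2)[OF \<sigma>] facet_of_link(2)[OF \<tau>] by auto
    with \<open>\<sigma> \<noteq> \<tau>\<close> have "\<sigma> \<union> S \<noteq> \<tau> \<union> S" by metis
    with cover facet_of_link(1)[OF \<sigma>] facet_of_link(1)[OF \<tau>]
    have "F \<subseteq> (\<sigma> \<union> S) \<union> (\<tau> \<union> S)" by simp
    then show "F - S \<subseteq> \<sigma> \<union> \<tau>" by auto
  qed
  ultimately show ?thesis unfolding shelling_step_def Let_def link_\<Gamma> by (rule conjI)
qed

lemma nth_filter_take:
  assumes "j < length (filter P xs)"
  shows "\<exists>i<length xs. filter P xs ! j = xs ! i \<and> P (xs ! i) \<and>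
           take j (filter P xs) = filter P (take i xs)"
  using assms
proof (induction xs arbitrary: j)
  case Nil
  then show ?case by simp
next
  case (Cons x xs)
  show ?case
  proof (cases "P x \<and> j = 0")
    case True
    then show ?thesis by (intro exI[of _ 0]) auto
  next
    case False
    define j' where "j' = (if P x then j - 1 else j)"
    have "j' < length (filter P xs)" using Cons.prems False unfolding j'_def by auto
    from Cons.IH[OF this] obtain i where "i < length xs" "filter P xs ! j' = xs ! i"
      "P (xs ! i)" "take j' (filter P xs) = filter P (take i xs)" by blast
    then show ?thesis using False unfolding j'_def
      by (intro exI[of _ "Suc i"]) (auto simp: take_Cons' nth_Cons' split: if_splits)
  qed
qed

lemma k_shelling_link:
  assumes sh: "k_shelling k D Fs" and fin: "\<forall>F\<in>D. finite F"
  shows "k_shelling k (link D S) (map (\<lambda>F. F - S) (filter (\<lambda>F. S \<subseteq> F) Fs))"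
proof -
  define L where "L = filter (\<lambda>F. S \<subseteq> F) Fs"
  define Fs' where "Fs' = map (\<lambda>F. F - S) L"
  have "distinct Fs \<and> set Fs = facets D \<and>
      (\<forall>j. 0 < j \<and> j < length Fs \<longrightarrow> shelling_step k (Fs ! j) (set (take j Fs)))"
    using sh unfolding k_shelling_iff_shelling_step .
  then have distinct: "distinct Fs" and facets: "set Fs = facets D"
    and steps: "\<And>j. 0 < j \<Longrightarrow> j < length Fs \<Longrightarrow> shelling_step k (Fs ! j) (set (take j Fs))"
    by simp_all
  have "inj_on (\<lambda>F. F - S) (set L)" unfolding L_def inj_on_def by auto
  then have "distinct Fs'" using distinct unfolding Fs'_def L_def by (simp add: distinct_map)
  moreover have "set Fs' = facets (link D S)"
    unfolding Fs'_def L_def facets_link facets [symmetric] by auto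
  moreover have "\<forall>j. 0 < j \<and> j < length Fs' \<longrightarrow> shelling_step k (Fs' ! j) (set (take j Fs'))"
  proof (intro allI impI)
    fix j assume "0 < j \<and> j < length Fs'"
    then have "0 < j" "j < length L" unfolding Fs'_def by simp_all
    then obtain i where i: "i < length Fs" "L ! j = Fs ! i" "S \<subseteq> Fs ! i"
      "take j L = filter (\<lambda>F. S \<subseteq> F) (take i Fs)"
      using nth_filter_take unfolding L_def by blast
    have "take j L \<noteq> []" using \<open>0 < j\<close> \<open>j < length L\<close> by (cases L) auto
    then obtain F' where F': "F' \<in> set (take i Fs)" "S \<subseteq> F'"
      unfolding i(4) filter_empty_conv by blast
    then have "0 < i" by (cases i) auto
    have "Fs ! i \<in> D" using i(1) facets unfolding facets_def by auto
    then have "shelling_step k (Fs ! i - S) ((\<lambda>F. F - S) ` {F\<in>set (take i Fs). S \<subseteq> F})"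
      using shelling_step_link[OF steps[OF \<open>0 < i\<close> i(1)]] fin i(3) F' by blast
    then show "shelling_step k (Fs' ! j) (set (take j Fs'))"
      using \<open>j < length L\<close> i unfolding Fs'_def by (simp add: take_map)
  qed
  ultimately have "k_shelling k (link D S) Fs'"
    unfolding k_shelling_iff_shelling_step by (intro conjI)
  then show ?thesis unfolding Fs'_def L_def .
qed

lemma link_ind_complex:
  assumes "S \<subseteq> V" "independent_set E S"
  shows "link (ind_complex V E) S =
    ind_complex (del_verts V (closed_nbhd V E S)) (del_edges E (closed_nbhd V E S))"
proof -
  let ?N = "closed_nbhd V E S"
  have N: "x \<in> ?N \<longleftrightarrow> x \<in> S \<or> (\<exists>s\<in>S. x \<in> V \<and> {s, x} \<in> E)" for x
    unfolding closed_nbhd_def adjacent_def by blast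
  have S: "\<forall>x\<in>S. \<forall>y\<in>S. {x, y} \<notin> E"
    using assms(2) unfolding independent_set_def adjacent_def by blast
  show ?thesis
  proof (intro set_eqI iffI)
    fix F assume "F \<in> link (ind_complex V E) S"
    then have F: "F \<inter> S = {}" "F \<union> S \<subseteq> V" "\<forall>x\<in>F \<union> S. \<forall>y\<in>F \<union> S. {x, y} \<notin> E"
      unfolding link_def ind_complex_def independent_set_def adjacent_def by auto
    then have "F \<subseteq> V - ?N" using N by blast
    with F show "F \<in> ind_complex (del_verts V ?N) (del_edges E ?N)"
      unfolding ind_complex_def independent_set_def adjacent_def del_verts_def del_edges_def
      by blast
  next
    fix F assume "F \<in> ind_complex (del_verts V ?N) (del_edges E ?N)"
    then have F: "F \<subseteq> V - ?N" "\<forall>x\<in>F. \<forall>y\<in>F. {x, y} \<notin> E"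
      unfolding ind_complex_def independent_set_def adjacent_def del_verts_def del_edges_def
      by auto
    have "{x, y} \<notin> E" if "x \<in> F \<union> S" "y \<in> F \<union> S" for x y
      using that F S N by (metis DiffD1 DiffD2 Un_iff insert_commute subsetD)
    moreover have "F \<inter> S = {}" using F N by blast
    ultimately show "F \<in> link (ind_complex V E) S"
      unfolding link_def ind_complex_def independent_set_def adjacent_def using F assms(1) by blast
  qed
qed

theorem corollary4p5:
  fixes V :: "'a set" and E :: "'a set set" and S :: "'a set" and k :: nat
  assumes "simple_graph V E"
    and "S \<subseteq> V"
    and "independent_set E S"
    and "k_shellable_graph k V E"
  shows "k_shellable_graph k (del_verts V (closed_nbhd V E S)) (del_edges E (closed_nbhd V E S))"
proof -
  have "finite V" using assms(1) unfolding simple_graph_def by blast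
  then have fin: "\<forall>F\<in>ind_complex V E. finite F"
    unfolding ind_complex_def using finite_subset by blast
  from assms(4) obtain Fs where "1 \<le> k" and "k_shelling k (ind_complex V E) Fs"
    unfolding k_shellable_graph_def k_shellable_def by blast
  then have "k_shelling k (link (ind_complex V E) S) (map (\<lambda>F. F - S) (filter (\<lambda>F. S \<subseteq> F) Fs))"
    using fin by (intro k_shelling_link)
  with \<open>1 \<le> k\<close> show ?thesis
    unfolding k_shellable_graph_def k_shellable_def link_ind_complex[OF assms(2,3)] by blast
qed

end
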